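(* Let $(X,\mathcal{C},O)$ be a simple compatibility scenario with $O=\{0,1\}$ whose compatibility graph contains at least one cycle, and let $\mathrm{B}=\{p_C\}$ be a nondisturbing behavior for it. Then $\mathrm{B}$ is logically contextual if and only if there exist a cycle $N_1,N_2,\dots,N_m$ ($m\geq 3$) of the compatibility graph, an index $1\leq i\leq m$, $(a,b)\in\{0,1\}^2$ and $(\alpha_1,\dots,\alpha_{m-2})\in\{0,1\}^{m-2}$ such that, writing $q_r(x,y)$ for the probability, under $p_{\{N_r,N_{r+1}\}}$, that $N_r=x$ and $N_{r+1}=y$ (indices modulo $m$), $q_i(a,b)>0$, $q_{i+1}(b,\alpha_1)=0$, $q_{i+j}(\lnot\alpha_{j-1},\alpha_j)=0$ for $2\leq j\leq m-2$, and $q_{i+m-1}(\lnot\alpha_{m-2},a)=0$, where $\lnot x=1-x$.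
   Context: A compatibility scenario is a triple $(X,\mathcal{C},O)$ with $X,O$ finite sets and $\mathcal{C}$ a family of subsets of $X$ (contexts) covering $X$, none properly contained in another. It is simple if every context has at most two elements; its compatibility graph has vertex set $X$ and an edge $\{M,M'\}$ for each two-element context. A cycle is a sequence of distinct vertices $N_1,\dots,N_m$, $m\geq3$, with $\{N_r,N_{r+1}\}\in\mathcal{C}$ for all $r$ (indices mod $m$). For $\Omega\subseteq X$, $O^\Omega$ is the set of functions $\Omega\to O$. A behavior is a family of probability distributions $p_C$ on $O^C$, $C\in\mathcal{C}$; it is nondisturbing if for all $C,C'$ the marginals of $p_C$ and $p_{C'}$ on $C\cap C'$ coincide. Let $\bar p_C(s)=1$ if $p_C(s)>0$, else $0$. The behavior is logically noncontextual if there is $\bar p:O^X\to\{0,1\}$ with $\max\{\bar p(t):t\in O^X, t|_C=s\}=\bar p_C(s)$ for all $C\in\mathcal{C}$, $s\in O^C$; otherwise logically contextual. *)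

theory Defs
  imports Complex_Main "HOL-Library.FuncSet"
begin

text \<open>Assignments \<open>O^\<Omega>\<close> are represented as extensional functions \<open>\<Omega> \<rightarrow>\<^sub>E Out\<close>.\<close>

definition compat_scenario :: "'x set \<Rightarrow> 'x set set \<Rightarrow> 'o set \<Rightarrow> bool" where
  "compat_scenario X Cs Out \<longleftrightarrow> finite X \<and> finite Out \<and> (\<forall>C\<in>Cs. C \<subseteq> X) \<and> \<Union>Cs = X
     \<and> (\<forall>C\<in>Cs. \<forall>C'\<in>Cs. \<not> C \<subset> C')"

definition simple_scenario :: "'x set set \<Rightarrow> bool" where
  "simple_scenario Cs \<longleftrightarrow> (\<forall>C\<in>Cs. card C \<le> 2)"

text \<open>A cycle \<open>N_1,\<dots>,N_m\<close> of the compatibility graph, as a list (0-based indices mod m).\<close>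
definition is_cycle :: "'x set set \<Rightarrow> 'x list \<Rightarrow> bool" where
  "is_cycle Cs N \<longleftrightarrow> length N \<ge> 3 \<and> distinct N \<and>
     (\<forall>r < length N. {N ! r, N ! ((r + 1) mod length N)} \<in> Cs)"

definition behavior :: "'x set set \<Rightarrow> 'o set \<Rightarrow> ('x set \<Rightarrow> ('x \<Rightarrow> 'o) \<Rightarrow> real) \<Rightarrow> bool" where
  "behavior Cs Out p \<longleftrightarrow> (\<forall>C\<in>Cs. (\<forall>s\<in>C \<rightarrow>\<^sub>E Out. p C s \<ge> 0) \<and> (\<Sum>s\<in>C \<rightarrow>\<^sub>E Out. p C s) = 1)"

definition marginal :: "'o set \<Rightarrow> ('x set \<Rightarrow> ('x \<Rightarrow> 'o) \<Rightarrow> real) \<Rightarrow> 'x set \<Rightarrow> 'x set \<Rightarrow> ('x \<Rightarrow> 'o) \<Rightarrow> real" where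
  "marginal Out p C D t = (\<Sum>s\<in>{s \<in> C \<rightarrow>\<^sub>E Out. restrict s D = t}. p C s)"

definition nondisturbing :: "'x set set \<Rightarrow> 'o set \<Rightarrow> ('x set \<Rightarrow> ('x \<Rightarrow> 'o) \<Rightarrow> real) \<Rightarrow> bool" where
  "nondisturbing Cs Out p \<longleftrightarrow> (\<forall>C\<in>Cs. \<forall>C'\<in>Cs. \<forall>t\<in>(C \<inter> C') \<rightarrow>\<^sub>E Out.
      marginal Out p C (C \<inter> C') t = marginal Out p C' (C \<inter> C') t)"

text \<open>Support indicator \<open>\<bar>p_C(s) = 1\<close> iff \<open>p_C(s) > 0\<close>; \<open>\<bar>p\<close> is a 0/1-valued function on \<open>O^X\<close>,
  represented as a predicate, and the max over extensions equals 1 iff some extension has value 1.\<close>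
definition logically_noncontextual ::
  "'x set \<Rightarrow> 'x set set \<Rightarrow> 'o set \<Rightarrow> ('x set \<Rightarrow> ('x \<Rightarrow> 'o) \<Rightarrow> real) \<Rightarrow> bool" where
  "logically_noncontextual X Cs Out p \<longleftrightarrow> (\<exists>pb :: ('x \<Rightarrow> 'o) \<Rightarrow> nat.
      (\<forall>t\<in>X \<rightarrow>\<^sub>E Out. pb t \<in> {0,1}) \<and>
      (\<forall>C\<in>Cs. \<forall>s\<in>C \<rightarrow>\<^sub>E Out.
          Max {pb t | t. t \<in> X \<rightarrow>\<^sub>E Out \<and> restrict t C = s} = (if p C s > 0 then 1 else 0)))"

definition logically_contextual ::
  "'x set \<Rightarrow> 'x set set \<Rightarrow> 'o set \<Rightarrow> ('x set \<Rightarrow> ('x \<Rightarrow> 'o) \<Rightarrow> real) \<Rightarrow> bool" where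
  "logically_contextual X Cs Out p \<longleftrightarrow> \<not> logically_noncontextual X Cs Out p"

text \<open>\<open>q_r(x,y)\<close>: probability under \<open>p_{N_r,N_{r+1}}\<close> that \<open>N_r = x\<close> and \<open>N_{r+1} = y\<close>
  (0-based indices taken mod m).\<close>
definition edge_prob :: "('x set \<Rightarrow> ('x \<Rightarrow> 'o) \<Rightarrow> real) \<Rightarrow> 'x list \<Rightarrow> nat \<Rightarrow> 'o \<Rightarrow> 'o \<Rightarrow> real" where
  "edge_prob p N r x y =
     (let m = length N; u = N ! (r mod m); v = N ! ((r + 1) mod m)
      in p {u, v} ((\<lambda>_. undefined)(u := x, v := y)))"

end

(*
  A 0/1 assignment t of X is a global section of the support of p when p C (t|C) > 0 for every
  context C, and logical noncontextuality says exactly that every possible local event extends to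
  a global section. In a simple scenario this is a 2-SAT problem: on an edge {x, y} the literal
  x = a forces y = b when q(x = a, y = 1 - b) = 0. Nondisturbance makes possibility a property of
  single literals that is inherited along forcing, so the greedy 2-SAT argument extends a possible
  event unless some possible edge event (x = a, y = b) admits a forcing walk from y = b to x = 1 - a.
  Shortening such a walk until its vertices are distinct closes it, together with the edge {x, y},
  into a cycle of the compatibility graph satisfying the stated condition. Conversely, along such a
  cycle every global section through the event (N_i = a, N_(i+1) = b) is forced to give N_i the
  value 1 - a.
*)

theory Submission
  imports Defs
begin

section \<open>Assignments, marginals and global sections\<close>

lemma Max_zero_one_eq_iff:
  assumes "M \<subseteq> {0::nat, 1}" and "M \<noteq> {}"
  shows "Max M = (if B then 1 else 0) \<longleftrightarrow> (1 \<in> M \<longleftrightarrow> B)"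
proof -
  have "M = {0} \<or> M = {1} \<or> M = {0, 1}"
    using assms by auto
  then show ?thesis
    by auto
qed

lemma PiE_extension_exists:
  assumes "C \<subseteq> X" and "Out \<noteq> {}" and "s \<in> C \<rightarrow>\<^sub>E Out"
  shows "\<exists>t\<in>X \<rightarrow>\<^sub>E Out. restrict t C = s"
proof -
  obtain z where z: "z \<in> Out"
    using assms(2) by blast
  define t where "t x = (if x \<in> C then s x else if x \<in> X then z else undefined)" for x
  have "t \<in> X \<rightarrow>\<^sub>E Out"
    using assms(1,3) z by (auto simp: t_def PiE_iff extensional_def)
  moreover have "restrict t C = s"
    using assms(3) by (auto simp: t_def PiE_iff extensional_def fun_eq_iff)
  ultimately show ?thesis
    by blast
qed

definition global_section ::
  "'x set \<Rightarrow> 'x set set \<Rightarrow> 'o set \<Rightarrow> ('x set \<Rightarrow> ('x \<Rightarrow> 'o) \<Rightarrow> real) \<Rightarrow> ('x \<Rightarrow> 'o) \<Rightarrow> bool"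
  where "global_section X Cs Out p t \<longleftrightarrow> t \<in> X \<rightarrow>\<^sub>E Out \<and> (\<forall>C\<in>Cs. 0 < p C (restrict t C))"

lemma extension_if_logically_noncontextual:
  fixes X :: "'x set" and Out :: "'o set"
  assumes "\<forall>C\<in>Cs. C \<subseteq> X" and "Out \<noteq> {}" and "logically_noncontextual X Cs Out p"
    and "C \<in> Cs" and "s \<in> C \<rightarrow>\<^sub>E Out" and "0 < p C s"
  shows "\<exists>t. global_section X Cs Out p t \<and> restrict t C = s"
proof -
  obtain pb :: "('x \<Rightarrow> 'o) \<Rightarrow> nat" where pb01: "\<forall>t\<in>X \<rightarrow>\<^sub>E Out. pb t \<in> {0, 1}"
    and pb_Max: "\<forall>C\<in>Cs. \<forall>s\<in>C \<rightarrow>\<^sub>E Out.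
      Max {pb t | t. t \<in> X \<rightarrow>\<^sub>E Out \<and> restrict t C = s} = (if 0 < p C s then 1 else 0)"
    using assms(3) unfolding logically_noncontextual_def by blast
  have support: "(\<exists>t\<in>X \<rightarrow>\<^sub>E Out. restrict t C' = s' \<and> pb t = 1) \<longleftrightarrow> 0 < p C' s'"
    if "C' \<in> Cs" and "s' \<in> C' \<rightarrow>\<^sub>E Out" for C' s'
  proof -
    let ?M = "{pb t | t. t \<in> X \<rightarrow>\<^sub>E Out \<and> restrict t C' = s'}"
    have "?M \<subseteq> {0, 1}"
      using pb01 by auto
    moreover have "?M \<noteq> {}"
      using PiE_extension_exists[OF _ assms(2) that(2)] assms(1) that(1) by blast
    ultimately have Max_iff: "Max ?M = (if 0 < p C' s' then 1 else 0) \<longleftrightarrow> (1 \<in> ?M \<longleftrightarrow> 0 < p C' s')"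
      by (rule Max_zero_one_eq_iff)
    have "(\<exists>t\<in>X \<rightarrow>\<^sub>E Out. restrict t C' = s' \<and> pb t = 1) \<longleftrightarrow> 1 \<in> ?M"
      by (auto simp: eq_commute)
    also have "\<dots> \<longleftrightarrow> 0 < p C' s'"
      using Max_iff pb_Max that by blast
    finally show ?thesis .
  qed
  obtain t where t: "t \<in> X \<rightarrow>\<^sub>E Out" "restrict t C = s" "pb t = 1"
    using support assms(4-6) by blast
  have "0 < p C' (restrict t C')" if "C' \<in> Cs" for C'
  proof -
    have "restrict t C' \<in> C' \<rightarrow>\<^sub>E Out"
      using t(1) assms(1) that by (auto simp: PiE_iff)
    then show ?thesis
      using support[OF that] t by blast
  qed
  then show ?thesis
    using t unfolding global_section_def by blast
qed

lemma logically_noncontextual_if_extensions: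
  assumes "\<forall>C\<in>Cs. C \<subseteq> X" and "Out \<noteq> {}"
    and extend: "\<And>C s. C \<in> Cs \<Longrightarrow> s \<in> C \<rightarrow>\<^sub>E Out \<Longrightarrow> 0 < p C s \<Longrightarrow>
      \<exists>t. global_section X Cs Out p t \<and> restrict t C = s"
  shows "logically_noncontextual X Cs Out p"
proof -
  define pb where "pb t = (if global_section X Cs Out p t then 1 else 0 :: nat)" for t
  have "Max {pb t | t. t \<in> X \<rightarrow>\<^sub>E Out \<and> restrict t C = s} = (if 0 < p C s then 1 else 0)"
    if "C \<in> Cs" and "s \<in> C \<rightarrow>\<^sub>E Out" for C s
  proof -
    let ?M = "{pb t | t. t \<in> X \<rightarrow>\<^sub>E Out \<and> restrict t C = s}"
    have sub: "?M \<subseteq> {0, 1}"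
      by (auto simp: pb_def)
    have ne: "?M \<noteq> {}"
      using PiE_extension_exists[OF _ assms(2) that(2)] assms(1) that(1) by blast
    have "1 \<in> ?M \<longleftrightarrow> (\<exists>t. global_section X Cs Out p t \<and> restrict t C = s)"
      by (auto simp: pb_def global_section_def split: if_splits)
    also have "\<dots> \<longleftrightarrow> 0 < p C s"
      using extend that unfolding global_section_def by blast
    finally show ?thesis
      by (simp only: Max_zero_one_eq_iff[OF sub ne])
  qed
  then show ?thesis
    unfolding logically_noncontextual_def by (intro exI[of _ pb]) (auto simp: pb_def)
qed

lemma marginal_pos_iff:
  assumes "finite C" and "finite Out" and "\<forall>s\<in>C \<rightarrow>\<^sub>E Out. 0 \<le> p C s"
  shows "0 < marginal Out p C D t \<longleftrightarrow> (\<exists>s\<in>C \<rightarrow>\<^sub>E Out. restrict s D = t \<and> 0 < p C s)"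
proof -
  let ?A = "{s \<in> C \<rightarrow>\<^sub>E Out. restrict s D = t}"
  have fin: "finite ?A"
    using assms(1,2) by (simp add: finite_PiE)
  have nonneg: "\<forall>s\<in>?A. 0 \<le> p C s"
    using assms(3) by blast
  have "0 < marginal Out p C D t \<longleftrightarrow> sum (p C) ?A \<noteq> 0"
    unfolding marginal_def using sum_nonneg[of ?A "p C"] nonneg by force
  also have "\<dots> \<longleftrightarrow> (\<exists>s\<in>?A. p C s \<noteq> 0)"
    using sum_nonneg_eq_0_iff[OF fin] nonneg by blast
  also have "\<dots> \<longleftrightarrow> (\<exists>s\<in>?A. 0 < p C s)"
    using nonneg by (auto simp: order_less_le)
  finally show ?thesis
    by blast
qed

lemma restrict_singleton: "restrict t {x} = (\<lambda>_. undefined)(x := t x)"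
  by (auto simp: fun_eq_iff)

lemma restrict_doubleton: "restrict t {x, y} = (\<lambda>_. undefined)(x := t x, y := t y)"
  by (auto simp: fun_eq_iff)

lemma singleton_fun_PiE: "c \<in> B \<Longrightarrow> (\<lambda>_. undefined)(x := c) \<in> {x} \<rightarrow>\<^sub>E B"
  by (simp add: PiE_iff extensional_def)

lemma doubleton_fun_PiE: "a \<in> B \<Longrightarrow> b \<in> B \<Longrightarrow> (\<lambda>_. undefined)(x := a, y := b) \<in> {x, y} \<rightarrow>\<^sub>E B"
  by (simp add: PiE_iff extensional_def)

section \<open>2-SAT\<close>

definition neg_lit :: "'v \<times> nat \<Rightarrow> 'v \<times> nat"
  where "neg_lit l = (fst l, 1 - snd l)"

lemma fst_neg_lit [simp]: "fst (neg_lit l) = fst l"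
  and snd_neg_lit [simp]: "snd (neg_lit l) = 1 - snd l"
  by (simp_all add: neg_lit_def)

lemma neg_lit_neg_lit [simp]: "snd l \<in> {0, 1} \<Longrightarrow> neg_lit (neg_lit l) = l"
  by (cases l) (auto simp: neg_lit_def)

lemma rtranclp_neg_lit:
  assumes "\<And>l m. R l m \<Longrightarrow> R (neg_lit m) (neg_lit l)" and "R\<^sup>*\<^sup>* l m"
  shows "R\<^sup>*\<^sup>* (neg_lit m) (neg_lit l)"
  using assms(2) by induction (auto intro: converse_rtranclp_into_rtranclp assms(1))

definition reachable :: "('a \<Rightarrow> 'a \<Rightarrow> bool) \<Rightarrow> 'a set \<Rightarrow> 'a set"
  where "reachable R S = {m. \<exists>l\<in>S. R\<^sup>*\<^sup>* l m}"

lemma reachable_closed: "l \<in> reachable R S \<Longrightarrow> R l m \<Longrightarrow> m \<in> reachable R S"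
  by (auto simp: reachable_def intro: rtranclp.rtrancl_into_rtrancl)

lemma reachable_invariant:
  assumes "\<And>l. l \<in> S \<Longrightarrow> Q l" and "\<And>l m. Q l \<Longrightarrow> R l m \<Longrightarrow> Q m" and "m \<in> reachable R S"
  shows "Q m"
proof -
  obtain l where "l \<in> S" and "R\<^sup>*\<^sup>* l m"
    using assms(3) unfolding reachable_def by blast
  from \<open>R\<^sup>*\<^sup>* l m\<close> show ?thesis
    by (induction rule: rtranclp_induct) (use assms(1,2) \<open>l \<in> S\<close> in blast)+
qed

lemma reachable_value_unique:
  assumes R_neg: "\<And>l m. R l m \<Longrightarrow> R (neg_lit m) (neg_lit l)"
    and S_consistent: "\<And>l l'. l \<in> S \<Longrightarrow> l' \<in> S \<Longrightarrow> \<not> R\<^sup>*\<^sup>* l (neg_lit l')"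
    and "(x, c) \<in> reachable R S" and "(x, c') \<in> reachable R S" and "c \<in> {0, 1}" and "c' \<in> {0, 1}"
  shows "c = c'"
proof (rule ccontr)
  assume "c \<noteq> c'"
  then have neg: "neg_lit (x, c') = (x, c)"
    using assms(5,6) by (auto simp: neg_lit_def)
  obtain l l' where "l \<in> S" "R\<^sup>*\<^sup>* l (x, c)" and "l' \<in> S" "R\<^sup>*\<^sup>* l' (x, c')"
    using assms(3,4) unfolding reachable_def by blast
  moreover from this(4) have "R\<^sup>*\<^sup>* (x, c) (neg_lit l')"
    using rtranclp_neg_lit[where R = R, OF R_neg] neg by fastforce
  ultimately show False
    using S_consistent by (meson rtranclp_trans)
qed

lemma consistent_insert_unforced:
  assumes R_neg: "\<And>l m. R l m \<Longrightarrow> R (neg_lit m) (neg_lit l)"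
    and S_vals: "\<And>l. l \<in> S \<Longrightarrow> snd l \<in> {0, 1}"
    and S_consistent: "\<And>l l'. l \<in> S \<Longrightarrow> l' \<in> S \<Longrightarrow> \<not> R\<^sup>*\<^sup>* l (neg_lit l')"
    and unreached: "x \<notin> fst ` reachable R S"
    and unforced: "\<not> R\<^sup>*\<^sup>* (x, c) (neg_lit (x, c))"
    and l: "l \<in> insert (x, c) S" and l': "l' \<in> insert (x, c) S"
  shows "\<not> R\<^sup>*\<^sup>* l (neg_lit l')"
proof
  assume reach: "R\<^sup>*\<^sup>* l (neg_lit l')"
  have not_reached: "\<not> R\<^sup>*\<^sup>* l'' (neg_lit (x, c))" if "l'' \<in> S" for l''
    using unreached that unfolding reachable_def by force
  consider "l \<in> S" "l' \<in> S" | "l' = (x, c)" | "l = (x, c)" "l' \<in> S"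
    using l l' by blast
  then show False
  proof cases
    case 1
    then show ?thesis
      using S_consistent reach by blast
  next
    case 2
    then show ?thesis
      using unforced not_reached reach l by blast
  next
    case 3
    then have "R\<^sup>*\<^sup>* l' (neg_lit (x, c))"
      using rtranclp_neg_lit[where R = R, OF R_neg reach] S_vals by simp
    then show ?thesis
      using not_reached 3 by blast
  qed
qed

lemma two_sat_covered:
  fixes R :: "'v \<times> nat \<Rightarrow> 'v \<times> nat \<Rightarrow> bool"
  assumes R_lits: "\<And>l m. R l m \<Longrightarrow> fst l \<in> V \<and> fst m \<in> V \<and> snd m \<in> {0, 1}"
    and R_neg: "\<And>l m. R l m \<Longrightarrow> R (neg_lit m) (neg_lit l)"
    and P_R: "\<And>l m. P l \<Longrightarrow> R l m \<Longrightarrow> P m"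
    and S: "\<And>l. l \<in> S \<Longrightarrow> fst l \<in> V \<and> snd l \<in> {0, 1} \<and> P l"
    and S_consistent: "\<And>l l'. l \<in> S \<Longrightarrow> l' \<in> S \<Longrightarrow> \<not> R\<^sup>*\<^sup>* l (neg_lit l')"
    and covered: "V \<subseteq> fst ` reachable R S"
  shows "\<exists>t\<in>V \<rightarrow>\<^sub>E {0, 1}. (\<forall>l\<in>S. t (fst l) = snd l) \<and> (\<forall>x\<in>V. P (x, t x)) \<and>
    (\<forall>l m. R l m \<longrightarrow> t (fst l) = snd l \<longrightarrow> t (fst m) = snd m)"
proof -
  let ?Cl = "reachable R S"
  have Cl_lit: "fst m \<in> V \<and> snd m \<in> {0, 1} \<and> P m" if "m \<in> ?Cl" for m
  proof (rule reachable_invariant[where Q = "\<lambda>m. fst m \<in> V \<and> snd m \<in> {0, 1} \<and> P m", OF S _ that])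
    fix l' m'
    assume "fst l' \<in> V \<and> snd l' \<in> {0, 1} \<and> P l'" and "R l' m'"
    then show "fst m' \<in> V \<and> snd m' \<in> {0, 1} \<and> P m'"
      using R_lits P_R by blast
  qed
  define t where "t = restrict (\<lambda>x. THE c. (x, c) \<in> ?Cl) V"
  have t_Cl: "t x = c \<longleftrightarrow> (x, c) \<in> ?Cl" if x: "x \<in> V" for x c
  proof -
    have unique: "c = c'" if "(x, c) \<in> ?Cl" and "(x, c') \<in> ?Cl" for c c'
      using reachable_value_unique[where R = R, OF R_neg S_consistent that] Cl_lit[OF that(1)]
        Cl_lit[OF that(2)] by simp
    obtain c0 where c0: "(x, c0) \<in> ?Cl"
      using covered x by force
    then have "t x = c0"
      using unique x by (auto simp: t_def intro: the_equality)
    then show ?thesis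
      using unique c0 by blast
  qed
  have t_in_Cl: "(x, t x) \<in> ?Cl" if "x \<in> V" for x
    using t_Cl that by blast
  have "t \<in> V \<rightarrow>\<^sub>E {0, 1}"
    using Cl_lit[OF t_in_Cl] by (auto simp: t_def PiE_iff)
  moreover have "\<forall>l\<in>S. t (fst l) = snd l"
    using t_Cl S unfolding reachable_def by fastforce
  moreover have "\<forall>x\<in>V. P (x, t x)"
    using Cl_lit[OF t_in_Cl] by blast
  moreover have "t (fst m) = snd m" if "R l m" and "t (fst l) = snd l" for l m
  proof -
    have "l \<in> ?Cl"
      using t_Cl R_lits that by (metis prod.collapse)
    then show ?thesis
      using t_Cl reachable_closed R_lits that by (metis prod.collapse)
  qed
  ultimately show ?thesis
    by blast
qed

(* The seeds are closed under R; a variable that is still unassigned is seeded with a value that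
   does not force its own negation. *)
lemma two_sat:
  fixes R :: "'v \<times> nat \<Rightarrow> 'v \<times> nat \<Rightarrow> bool"
  assumes "finite V"
    and R_lits: "\<And>l m. R l m \<Longrightarrow> fst l \<in> V \<and> fst m \<in> V \<and> snd m \<in> {0, 1}"
    and R_neg: "\<And>l m. R l m \<Longrightarrow> R (neg_lit m) (neg_lit l)"
    and P_R: "\<And>l m. P l \<Longrightarrow> R l m \<Longrightarrow> P m"
    and S: "\<And>l. l \<in> S \<Longrightarrow> fst l \<in> V \<and> snd l \<in> {0, 1} \<and> P l"
    and S_consistent: "\<And>l l'. l \<in> S \<Longrightarrow> l' \<in> S \<Longrightarrow> \<not> R\<^sup>*\<^sup>* l (neg_lit l')"
    and choice: "\<And>x. x \<in> V \<Longrightarrow> \<exists>c\<in>{0, 1}. P (x, c) \<and> \<not> R\<^sup>*\<^sup>* (x, c) (neg_lit (x, c))"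
  shows "\<exists>t\<in>V \<rightarrow>\<^sub>E {0, 1}. (\<forall>l\<in>S. t (fst l) = snd l) \<and> (\<forall>x\<in>V. P (x, t x)) \<and>
    (\<forall>l m. R l m \<longrightarrow> t (fst l) = snd l \<longrightarrow> t (fst m) = snd m)"
  using S S_consistent
proof (induction "card (V - fst ` S)" arbitrary: S rule: less_induct)
  case less
  show ?case
  proof (cases "V \<subseteq> fst ` reachable R S")
    case True
    then show ?thesis
      using two_sat_covered[where R = R and P = P and V = V and S = S] R_lits R_neg P_R less.prems
      by blast
  next
    case False
    then obtain x where x: "x \<in> V" "x \<notin> fst ` reachable R S"
      by blast
    obtain c where c: "c \<in> {0, 1}" "P (x, c)" "\<not> R\<^sup>*\<^sup>* (x, c) (neg_lit (x, c))"
      using choice x(1) by blast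
    let ?S = "insert (x, c) S"
    have S'_consistent: "\<not> R\<^sup>*\<^sup>* l (neg_lit l')" if "l \<in> ?S" and "l' \<in> ?S" for l l'
      using consistent_insert_unforced[where R = R, OF R_neg _ less.prems(2) x(2) c(3) that]
        less.prems(1) by blast
    have smaller: "card (V - fst ` ?S) < card (V - fst ` S)"
    proof -
      have "x \<in> V - fst ` S"
        using x unfolding reachable_def by force
      moreover have "V - fst ` ?S = (V - fst ` S) - {x}"
        by auto
      ultimately show ?thesis
        using \<open>finite V\<close> by (metis card_Diff1_less finite_Diff)
    qed
    have S': "fst l \<in> V \<and> snd l \<in> {0, 1} \<and> P l" if "l \<in> ?S" for l
      using less.prems(1)[of l] x(1) c that by auto
    have "\<exists>t\<in>V \<rightarrow>\<^sub>E {0, 1}. (\<forall>l\<in>?S. t (fst l) = snd l) \<and> (\<forall>x\<in>V. P (x, t x)) \<and>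
      (\<forall>l m. R l m \<longrightarrow> t (fst l) = snd l \<longrightarrow> t (fst m) = snd m)"
      by (rule less.hyps[OF smaller S' S'_consistent])
    then show ?thesis
      by blast
  qed
qed

definition walk :: "('a \<Rightarrow> 'a \<Rightarrow> bool) \<Rightarrow> 'a list \<Rightarrow> 'a \<Rightarrow> 'a \<Rightarrow> bool"
  where "walk R W a b \<longleftrightarrow> W \<noteq> [] \<and> hd W = a \<and> last W = b \<and> successively R W"

lemma walk_of_rtranclp:
  assumes "R\<^sup>*\<^sup>* a b"
  shows "\<exists>W. walk R W a b"
  using assms
proof (induction rule: rtranclp_induct)
  case base
  have "walk R [a] a a"
    by (simp add: walk_def)
  then show ?case ..
next
  case (step b c)
  then obtain W where "walk R W a b"
    by blast
  with \<open>R b c\<close> have "walk R (W @ [c]) a c"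
    by (auto simp: walk_def successively_append_iff)
  then show ?case ..
qed

lemma successively_take: "successively R xs \<Longrightarrow> successively R (take n xs)"
  using successively_append_iff[of R "take n xs" "drop n xs"] by simp

lemma successively_drop: "successively R xs \<Longrightarrow> successively R (drop n xs)"
  using successively_append_iff[of R "take n xs" "drop n xs"] by simp

lemma walk_cut_loop:
  assumes "walk R W a b" and "i < j" and "j < length W" and "W ! i = W ! j"
  shows "walk R (take i W @ drop j W) a b"
proof -
  have W: "W \<noteq> []" "hd W = a" "last W = b" "successively R W"
    using assms(1) by (auto simp: walk_def)
  have "R (last (take i W)) (hd (drop j W))" if "i > 0"
    using successively_nth[OF W(4), of "i - 1"] that assms(2-4) W(1)
    by (simp add: last_conv_nth hd_drop_conv_nth)
  then have "successively R (take i W @ drop j W)"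
    using successively_take[OF W(4)] successively_drop[OF W(4)]
    by (auto simp: successively_append_iff)
  moreover have "hd (take i W @ drop j W) = a"
    using W assms(2-4) by (cases "i = 0") (auto simp: hd_drop_conv_nth hd_conv_nth nth_append)
  ultimately show ?thesis
    using W assms(3) by (simp add: walk_def)
qed

lemma walk_segment:
  assumes "walk R W a b" and "i \<le> j" and "j < length W"
  shows "walk R (drop i (take (Suc j) W)) (W ! i) (W ! j)"
  using assms successively_drop[OF successively_take]
  by (auto simp: walk_def hd_drop_conv_nth last_conv_nth)

lemma successively_invariant:
  assumes "successively R xs" and "P (hd xs)" and "\<And>x y. P x \<Longrightarrow> R x y \<Longrightarrow> P y" and "x \<in> set xs"
  shows "P x"
  using assms(1,2,4) by (induction xs) (auto simp: successively_Cons intro: assms(3))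

definition joint_prob :: "('x set \<Rightarrow> ('x \<Rightarrow> nat) \<Rightarrow> real) \<Rightarrow> 'x \<times> nat \<Rightarrow> 'x \<times> nat \<Rightarrow> real"
  where "joint_prob p l m = p {fst l, fst m} ((\<lambda>_. undefined)(fst l := snd l, fst m := snd m))"

lemma joint_prob_commute: "fst l \<noteq> fst m \<Longrightarrow> joint_prob p l m = joint_prob p m l"
  by (simp add: joint_prob_def insert_commute fun_upd_twist)

lemma joint_prob_restrict: "joint_prob p (x, t x) (y, t y) = p {x, y} (restrict t {x, y})"
  by (simp add: joint_prob_def restrict_doubleton)

lemma edge_prob_eq_joint_prob:
  "edge_prob p N r x y = joint_prob p (N ! (r mod length N), x) (N ! ((r + 1) mod length N), y)"
  by (simp add: edge_prob_def joint_prob_def Let_def)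

lemma is_cycle_edge:
  assumes "is_cycle Cs N"
  shows "{N ! (r mod length N), N ! (Suc r mod length N)} \<in> Cs"
  using assms unfolding is_cycle_def
  by (metis mod_Suc_eq mod_less_divisor Suc_eq_plus1 zero_less_numeral less_le_trans)

lemma distinct_nth_mod_Suc_neq:
  assumes "distinct xs" and "2 \<le> length xs"
  shows "xs ! (r mod length xs) \<noteq> xs ! (Suc r mod length xs)"
proof -
  have "r mod length xs \<noteq> Suc r mod length xs"
    using assms(2) by (simp add: mod_Suc)
  moreover have "0 < length xs"
    using assms(2) by linarith
  ultimately show ?thesis
    using nth_eq_iff_index_eq[OF assms(1)] by simp
qed

(* w k is the value that the condition forces on N_(i+1+k): first b, then 1 - alpha_k, and
   finally 1 - a on N_(i+m) = N_i. *)
lemma cycle_condition_steps: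
  fixes N :: "'x list" and a b :: nat and \<alpha> :: "nat \<Rightarrow> nat"
  defines "w \<equiv> \<lambda>k. if k = 0 then b else if k = length N - 1 then 1 - a else 1 - \<alpha> k"
  assumes n: "3 \<le> length N" and a: "a \<in> {0, 1}"
    and \<alpha>01: "\<forall>j\<in>{1..length N - 2}. \<alpha> j \<in> {0, 1}"
    and E1: "edge_prob p N (i + 1) b (\<alpha> 1) = 0"
    and E2: "\<forall>j\<in>{2..length N - 2}. edge_prob p N (i + j) (1 - \<alpha> (j - 1)) (\<alpha> j) = 0"
    and E3: "edge_prob p N (i + length N - 1) (1 - \<alpha> (length N - 2)) a = 0"
    and k: "Suc k < length N"
  shows "edge_prob p N (i + 1 + k) (w k) (1 - w (Suc k)) = 0"
proof -
  have w_inner: "w j = 1 - \<alpha> j" and \<alpha>_inv: "1 - (1 - \<alpha> j) = \<alpha> j"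
    if "1 \<le> j" and "j \<le> length N - 2" for j
  proof -
    show "w j = 1 - \<alpha> j"
      using that n by (simp add: w_def)
    have "\<alpha> j \<in> {0, 1}"
      using \<alpha>01 that by simp
    then show "1 - (1 - \<alpha> j) = \<alpha> j"
      by auto
  qed
  consider "k = 0" | "1 \<le> k" "Suc k < length N - 1" | "Suc k = length N - 1"
    using k by linarith
  then show ?thesis
  proof cases
    case 1
    have "w 0 = b" and "1 - w 1 = \<alpha> 1"
      using w_inner[of 1] \<alpha>_inv[of 1] n by (simp_all add: w_def)
    then show ?thesis
      using E1 1 by simp
  next
    case 2
    then have "Suc k \<in> {2..length N - 2}"
      by simp
    then have "edge_prob p N (i + Suc k) (1 - \<alpha> k) (\<alpha> (Suc k)) = 0"
      using E2 by fastforce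
    moreover have "w k = 1 - \<alpha> k" and "1 - w (Suc k) = \<alpha> (Suc k)"
      using w_inner[of k] w_inner[of "Suc k"] \<alpha>_inv[of "Suc k"] 2 by simp_all
    ultimately show ?thesis
      by simp
  next
    case 3
    then have "k = length N - 2" and "i + 1 + k = i + length N - 1"
      by arith+
    moreover have "1 - w (Suc k) = a"
      using 3 n a by (auto simp: w_def)
    ultimately show ?thesis
      using E3 w_inner[of k] n by simp
  qed
qed

section \<open>Simple nondisturbing behaviors\<close>

locale simple_nondisturbing_behavior =
  fixes X :: "'x set" and Cs :: "'x set set" and p :: "'x set \<Rightarrow> ('x \<Rightarrow> nat) \<Rightarrow> real"
  assumes scenario: "compat_scenario X Cs {0, 1}"
    and simple: "simple_scenario Cs"
    and behavior: "behavior Cs {0, 1} p"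
    and nondisturbing: "nondisturbing Cs {0, 1} p"
begin

lemma context_subset: "C \<in> Cs \<Longrightarrow> C \<subseteq> X"
  using scenario by (auto simp: compat_scenario_def)

lemma finite_context: "C \<in> Cs \<Longrightarrow> finite C"
  using scenario context_subset by (meson compat_scenario_def finite_subset)

lemma context_eq_doubleton:
  assumes "C \<in> Cs" and "x \<in> C" and "y \<in> C" and "x \<noteq> y"
  shows "C = {x, y}"
proof -
  have "card C \<le> 2"
    using simple assms(1) by (simp add: simple_scenario_def)
  also have "\<dots> = card {x, y}"
    using assms(4) by simp
  finally have "card C \<le> card {x, y}" .
  moreover have "{x, y} \<subseteq> C"
    using assms(2,3) by blast
  ultimately show ?thesis
    using card_seteq[OF finite_context[OF assms(1)]] by blast
qed

lemma context_cases:
  assumes "C \<in> Cs"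
  obtains "C = {}" | x where "C = {x}" | x y where "x \<noteq> y" and "C = {x, y}"
  using context_eq_doubleton[OF assms] by blast

lemma prob_nonneg: "C \<in> Cs \<Longrightarrow> s \<in> C \<rightarrow>\<^sub>E {0, 1} \<Longrightarrow> 0 \<le> p C s"
  using behavior by (auto simp: behavior_def)

lemma prob_sum: "C \<in> Cs \<Longrightarrow> (\<Sum>s\<in>C \<rightarrow>\<^sub>E {0, 1}. p C s) = 1"
  using behavior by (auto simp: behavior_def)

lemma ex_positive_event:
  assumes "C \<in> Cs"
  obtains s where "s \<in> C \<rightarrow>\<^sub>E {0, 1}" and "0 < p C s"
proof -
  have "\<not> (\<forall>s\<in>C \<rightarrow>\<^sub>E {0, 1}. p C s \<le> 0)"
    using sum_nonpos[of "C \<rightarrow>\<^sub>E {0, 1}" "p C"] prob_sum[OF assms] by force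
  then obtain s where "s \<in> C \<rightarrow>\<^sub>E {0, 1}" and "\<not> p C s \<le> 0"
    by blast
  then show ?thesis
    by (intro that) auto
qed

lemma marginal_point_eq:
  assumes "C \<in> Cs" and "C' \<in> Cs" and "x \<in> C" and "x \<in> C'" and "t \<in> {x} \<rightarrow>\<^sub>E {0, 1}"
  shows "marginal {0, 1} p C {x} t = marginal {0, 1} p C' {x} t"
proof (cases "C = C'")
  case False
  have "C \<inter> C' = {x}"
    using context_eq_doubleton assms(1-4) False by blast
  then show ?thesis
    using nondisturbing assms unfolding nondisturbing_def by metis
qed simp

lemma marginal_pos_iff_event:
  assumes "C \<in> Cs"
  shows "0 < marginal {0, 1} p C D t \<longleftrightarrow> (\<exists>s\<in>C \<rightarrow>\<^sub>E {0, 1}. restrict s D = t \<and> 0 < p C s)"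
  by (rule marginal_pos_iff[OF finite_context[OF assms]]) (use prob_nonneg[OF assms] in auto)

definition possible :: "'x \<times> nat \<Rightarrow> bool"
  where "possible l \<longleftrightarrow> snd l \<in> {0, 1} \<and>
    (\<forall>C\<in>Cs. fst l \<in> C \<longrightarrow> 0 < marginal {0, 1} p C {fst l} ((\<lambda>_. undefined)(fst l := snd l)))"

definition possible_pair :: "'x \<times> nat \<Rightarrow> 'x \<times> nat \<Rightarrow> bool"
  where "possible_pair l m \<longleftrightarrow> fst l \<noteq> fst m \<and> {fst l, fst m} \<in> Cs \<and>
    snd l \<in> {0, 1} \<and> snd m \<in> {0, 1} \<and> 0 < joint_prob p l m"

definition forces :: "'x \<times> nat \<Rightarrow> 'x \<times> nat \<Rightarrow> bool"
  where "forces l m \<longleftrightarrow> fst l \<noteq> fst m \<and> {fst l, fst m} \<in> Cs \<and>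
    snd l \<in> {0, 1} \<and> snd m \<in> {0, 1} \<and> joint_prob p l (neg_lit m) = 0"

lemma possible_of_event:
  assumes "C \<in> Cs" and "s \<in> C \<rightarrow>\<^sub>E {0, 1}" and "0 < p C s" and "x \<in> C"
  shows "possible (x, s x)"
proof -
  let ?t = "(\<lambda>_. undefined)(x := s x)"
  have sx: "s x \<in> {0, 1}"
    using assms(2,4) by blast
  then have "?t \<in> {x} \<rightarrow>\<^sub>E {0, 1}"
    by (rule singleton_fun_PiE)
  moreover have "0 < marginal {0, 1} p C {x} ?t"
    unfolding marginal_pos_iff_event[OF assms(1)] using assms(2,3) restrict_singleton[of s x] by blast
  ultimately have "0 < marginal {0, 1} p C' {x} ?t" if "C' \<in> Cs" and "x \<in> C'" for C'
    using marginal_point_eq[OF assms(1) that(1) assms(4) that(2)] by simp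
  with sx show ?thesis
    by (simp add: possible_def)
qed

lemma possibleE:
  assumes "possible (x, c)" and "C \<in> Cs" and "x \<in> C"
  obtains s where "s \<in> C \<rightarrow>\<^sub>E {0, 1}" and "s x = c" and "0 < p C s"
proof -
  have "0 < marginal {0, 1} p C {x} ((\<lambda>_. undefined)(x := c))"
    using assms by (simp add: possible_def)
  then obtain s where "s \<in> C \<rightarrow>\<^sub>E {0, 1}" "restrict s {x} = (\<lambda>_. undefined)(x := c)" "0 < p C s"
    using marginal_pos_iff_event[OF assms(2)] by blast
  moreover from this(2) have "s x = c"
    by (metis fun_upd_same restrict_singleton)
  ultimately show ?thesis
    using that by blast
qed

lemma possible_pair_possible:
  assumes "possible_pair l m"
  shows "possible l" and "possible m"
proof -
  let ?C = "{fst l, fst m}" and ?s = "(\<lambda>_. undefined)(fst l := snd l, fst m := snd m)"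
  have C: "?C \<in> Cs" "fst l \<noteq> fst m" and vals: "snd l \<in> {0, 1}" "snd m \<in> {0, 1}"
    and pos: "0 < p ?C ?s"
    using assms by (simp_all add: possible_pair_def joint_prob_def)
  have s: "?s \<in> ?C \<rightarrow>\<^sub>E {0, 1}"
    using doubleton_fun_PiE[OF vals] .
  have "possible (fst l, ?s (fst l))" and "possible (fst m, ?s (fst m))"
    by (rule possible_of_event[OF C(1) s pos]; simp)+
  then show "possible l" and "possible m"
    using C(2) by simp_all
qed

lemma forces_neg_lit:
  assumes "forces l m"
  shows "forces (neg_lit m) (neg_lit l)"
proof -
  have "snd l \<in> {0, 1}" and "fst l \<noteq> fst m"
    using assms by (auto simp: forces_def)
  then have "joint_prob p (neg_lit m) (neg_lit (neg_lit l)) = joint_prob p l (neg_lit m)"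
    by (simp add: joint_prob_commute[of "neg_lit m" l])
  then show ?thesis
    using assms by (auto simp: forces_def neg_lit_def insert_commute)
qed

lemma possible_pair_of_forces:
  assumes "possible l" and "forces l m"
  shows "possible_pair l m"
proof -
  obtain x a y b where l: "l = (x, a)" and m: "m = (y, b)"
    by fastforce
  have xy: "x \<noteq> y" "{x, y} \<in> Cs" and ab: "a \<in> {0, 1}" "b \<in> {0, 1}"
    and zero: "joint_prob p (x, a) (y, 1 - b) = 0"
    using assms(2) by (auto simp: forces_def neg_lit_def l m)
  obtain s where s: "s \<in> {x, y} \<rightarrow>\<^sub>E {0, 1}" "s x = a" "0 < p {x, y} s"
    using possibleE[OF assms(1)[unfolded l] xy(2)] by blast
  have "joint_prob p (x, s x) (y, s y) = p {x, y} s"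
    by (simp only: joint_prob_restrict PiE_restrict[OF s(1)])
  then have pos: "0 < joint_prob p (x, s x) (y, s y)"
    using s(3) by simp
  have "s y \<in> {0, 1}"
    using s(1) by blast
  then have "s y = b"
    using ab(2) pos zero s(2) by auto
  then show ?thesis
    using xy ab pos s(2) by (simp add: possible_pair_def l m)
qed

lemma possible_forces: "possible l \<Longrightarrow> forces l m \<Longrightarrow> possible m"
  using possible_pair_possible(2) possible_pair_of_forces by blast

lemma ex_possible:
  assumes "x \<in> X"
  shows "\<exists>c\<in>{0, 1}. possible (x, c)"
proof -
  obtain C where C: "C \<in> Cs" "x \<in> C"
    using assms scenario by (auto simp: compat_scenario_def)
  obtain s where "s \<in> C \<rightarrow>\<^sub>E {0, 1}" and "0 < p C s"
    using ex_positive_event[OF C(1)] .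
  then show ?thesis
    using possible_of_event[OF C(1)] C(2) by blast
qed

lemma possible_singleton:
  assumes "{x} \<in> Cs" and "possible (x, c)"
  shows "0 < p {x} ((\<lambda>_. undefined)(x := c))"
proof -
  obtain s where "s \<in> {x} \<rightarrow>\<^sub>E {0, 1}" "s x = c" "0 < p {x} s"
    using possibleE[OF assms(2,1)] by blast
  then show ?thesis
    by (metis PiE_restrict restrict_singleton)
qed

lemma forces_sound:
  assumes "global_section X Cs {0, 1} p t" and "forces l m" and "t (fst l) = snd l"
  shows "t (fst m) = snd m"
proof (rule ccontr)
  assume "t (fst m) \<noteq> snd m"
  moreover have "fst m \<in> X" and "snd m \<in> {0, 1}" and "{fst l, fst m} \<in> Cs"
    using assms(2) context_subset by (auto simp: forces_def)
  moreover have "t (fst m) \<in> {0, 1}"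
    using assms(1) \<open>fst m \<in> X\<close> by (auto simp: global_section_def)
  ultimately have "neg_lit m = (fst m, t (fst m))"
    by (auto simp: neg_lit_def)
  moreover have "0 < joint_prob p (fst l, t (fst l)) (fst m, t (fst m))"
    using assms(1) \<open>{fst l, fst m} \<in> Cs\<close> by (simp add: global_section_def joint_prob_restrict)
  ultimately show False
    using assms(2,3) by (simp add: forces_def)
qed

lemma global_section_of_forces_closed:
  assumes t: "t \<in> X \<rightarrow>\<^sub>E {0, 1}" and possible_t: "\<forall>x\<in>X. possible (x, t x)"
    and closed: "\<forall>l m. forces l m \<longrightarrow> t (fst l) = snd l \<longrightarrow> t (fst m) = snd m"
  shows "global_section X Cs {0, 1} p t"
  unfolding global_section_def
proof (intro conjI t ballI)
  fix C
  assume C: "C \<in> Cs"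
  then show "0 < p C (restrict t C)"
  proof (cases rule: context_cases)
    case 1
    then show ?thesis
      using prob_sum[OF C] by (simp add: restrict_def)
  next
    case (2 x)
    then show ?thesis
      using possible_singleton C possible_t context_subset[OF C] by (simp add: restrict_singleton)
  next
    case (3 x y)
    have xX: "x \<in> X" and yX: "y \<in> X"
      using context_subset[OF C] 3 by auto
    have tx: "t x \<in> {0, 1}" and ty: "t y \<in> {0, 1}"
      using PiE_mem[OF t xX] PiE_mem[OF t yX] .
    have "\<not> forces (x, t x) (y, 1 - t y)"
    proof
      assume "forces (x, t x) (y, 1 - t y)"
      then have "t y = 1 - t y"
        using closed by (metis fst_conv snd_conv)
      then show False
        by arith
    qed
    moreover have "neg_lit (y, 1 - t y) = (y, t y)"
      using ty by (auto simp: neg_lit_def)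
    ultimately have "p C (restrict t C) \<noteq> 0"
      using C 3 tx ty by (auto simp: forces_def joint_prob_restrict)
    moreover have "restrict t C \<in> C \<rightarrow>\<^sub>E {0, 1}"
      using t context_subset[OF C] by (auto simp: PiE_iff)
    ultimately show ?thesis
      using prob_nonneg[OF C] by (simp add: order_less_le)
  qed
qed

lemma walk_possible:
  assumes "possible a" and "walk forces W a b" and "w \<in> set W"
  shows "possible w"
  using assms(2) unfolding walk_def
  by (intro successively_invariant[of forces W possible, OF _ _ _ assms(3)]) (use assms(1) possible_forces in auto)

subsection \<open>Refuting cycles\<close>

(* In the notation of the theorem, hd W = (N_(i+1), b) and last W = (N_i, 1 - a). *)
definition refuting_cycle :: "('x \<times> nat) list \<Rightarrow> bool"
  where "refuting_cycle W \<longleftrightarrow> 3 \<le> length W \<and> distinct (map fst W) \<and> successively forces W \<and>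
    possible_pair (neg_lit (last W)) (hd W)"

lemma refuting_cycle_of_distinct_walk:
  assumes pair: "possible_pair l m" and W: "walk forces W m (neg_lit l)" and "distinct (map fst W)"
  shows "refuting_cycle W"
proof -
  have W': "W \<noteq> []" "hd W = m" "last W = neg_lit l" "successively forces W"
    using W by (auto simp: walk_def)
  have l: "fst l \<noteq> fst m" "snd l \<in> {0, 1}"
    using pair by (auto simp: possible_pair_def)
  have "length W \<noteq> 1"
    using W' l by (auto simp: length_Suc_conv)
  moreover have "length W \<noteq> 2"
  proof
    assume "length W = 2"
    then have "W = [m, neg_lit l]"
      using W' by (auto simp: length_Suc_conv numeral_2_eq_2)
    then have "joint_prob p m l = 0"
      using W' l by (simp add: forces_def)
    then show False
      using pair l by (simp add: possible_pair_def joint_prob_commute)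
  qed
  ultimately have "3 \<le> length W"
    using W'(1) length_greater_0_conv[of W] by linarith
  then show ?thesis
    using assms W' l by (simp add: refuting_cycle_def)
qed

(* A vertex repeated on the walk either closes a loop, which is cut out, or carries opposite
   values, and then the walk from its first occurrence is a shorter instance. *)
lemma refuting_cycle_of_walk:
  assumes "possible_pair l m" and "walk forces W m (neg_lit l)"
  shows "\<exists>W'. refuting_cycle W'"
  using assms
proof (induction "length W" arbitrary: l m W rule: less_induct)
  case less
  have W: "successively forces W"
    using less.prems(2) by (simp add: walk_def)
  have possible_W: "possible w" if "w \<in> set W" for w
    using walk_possible[OF possible_pair_possible(2)[OF less.prems(1)] less.prems(2) that] .
  show ?case
  proof (cases "distinct (map fst W)")
    case True
    then show ?thesis
      using refuting_cycle_of_distinct_walk less.prems by blast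
  next
    case False
    then obtain i j where "i \<noteq> j" "i < length W" "j < length W" "fst (W ! i) = fst (W ! j)"
      by (auto simp: distinct_conv_nth)
    then obtain i j where ij: "i < j" "j < length W" "fst (W ! i) = fst (W ! j)"
      by (metis linorder_neq_iff)
    show ?thesis
    proof (cases "W ! i = W ! j")
      case True
      then have "walk forces (take i W @ drop j W) m (neg_lit l)"
        by (rule walk_cut_loop[OF less.prems(2) ij(1,2)])
      moreover have "length (take i W @ drop j W) < length W"
        using ij by simp
      ultimately show ?thesis
        using less.hyps less.prems(1) by blast
    next
      case False
      have "possible (W ! i)" and "possible (W ! j)"
        using possible_W ij by simp_all
      then have "W ! j = neg_lit (W ! i)"
        using False ij(3) by (auto simp: possible_def neg_lit_def prod_eq_iff)
      have "possible_pair (W ! i) (W ! Suc i)"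
        using possible_pair_of_forces \<open>possible (W ! i)\<close> successively_nth[OF W, of i] ij by simp
      moreover have "walk forces (drop (Suc i) (take (Suc j) W)) (W ! Suc i) (neg_lit (W ! i))"
        using walk_segment[OF less.prems(2), of "Suc i" j] ij \<open>W ! j = neg_lit (W ! i)\<close> by simp
      moreover have "length (drop (Suc i) (take (Suc j) W)) < length W"
        using ij by simp
      ultimately show ?thesis
        using less.hyps by blast
    qed
  qed
qed

lemma refuting_cycle_of_rtranclp:
  assumes "possible_pair l m" and "forces\<^sup>*\<^sup>* m (neg_lit l)"
  shows "\<exists>W. refuting_cycle W"
  using refuting_cycle_of_walk[OF assms(1)] walk_of_rtranclp[OF assms(2)] by blast

lemma refuting_cycle_of_self_refutation:
  assumes "possible l" and "forces\<^sup>*\<^sup>* l (neg_lit l)"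
  shows "\<exists>W. refuting_cycle W"
proof -
  have "l \<noteq> neg_lit l"
    using assms(1) by (auto simp: possible_def prod_eq_iff)
  then obtain m where "forces l m" and "forces\<^sup>*\<^sup>* m (neg_lit l)"
    using assms(2) by (metis converse_rtranclpE)
  then show ?thesis
    using refuting_cycle_of_rtranclp possible_pair_of_forces assms(1) by blast
qed

lemma forces_lits: "forces l m \<Longrightarrow> fst l \<in> X \<and> fst m \<in> X \<and> snd m \<in> {0, 1}"
  using context_subset by (auto simp: forces_def)

lemma not_forces_neg_event_literal:
  assumes no_cycle: "\<nexists>W. refuting_cycle W"
    and C: "C \<in> Cs" and s: "s \<in> C \<rightarrow>\<^sub>E {0, 1}" and pos: "0 < p C s" and x: "x \<in> C" and x': "x' \<in> C"
  shows "\<not> forces\<^sup>*\<^sup>* (x, s x) (neg_lit (x', s x'))"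
proof
  assume reach: "forces\<^sup>*\<^sup>* (x, s x) (neg_lit (x', s x'))"
  show False
  proof (cases "x = x'")
    case True
    then show False
      using refuting_cycle_of_self_refutation possible_of_event[OF C s pos x] reach no_cycle by blast
  next
    case False
    then have "C = {x', x}"
      using context_eq_doubleton C x x' by blast
    then have "joint_prob p (x', s x') (x, s x) = p C s"
      using s by (simp add: joint_prob_restrict)
    moreover have "s x \<in> {0, 1}" and "s x' \<in> {0, 1}"
      using s x x' by blast+
    ultimately have "possible_pair (x', s x') (x, s x)"
      using pos False C \<open>C = {x', x}\<close> by (simp add: possible_pair_def)
    then show False
      using refuting_cycle_of_rtranclp reach no_cycle by blast
  qed
qed

lemma extension_if_no_refuting_cycle:
  assumes no_cycle: "\<nexists>W. refuting_cycle W"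
    and C: "C \<in> Cs" and s: "s \<in> C \<rightarrow>\<^sub>E {0, 1}" and pos: "0 < p C s"
  shows "\<exists>t. global_section X Cs {0, 1} p t \<and> restrict t C = s"
proof -
  let ?S = "(\<lambda>x. (x, s x)) ` C"
  have S: "fst l \<in> X \<and> snd l \<in> {0, 1} \<and> possible l" if "l \<in> ?S" for l
    using that context_subset[OF C] possible_of_event[OF C s pos] s by auto
  have S_consistent: "\<not> forces\<^sup>*\<^sup>* l (neg_lit l')" if "l \<in> ?S" and "l' \<in> ?S" for l l'
    using that not_forces_neg_event_literal[OF no_cycle C s pos] by blast
  have choice: "\<exists>c\<in>{0, 1}. possible (x, c) \<and> \<not> forces\<^sup>*\<^sup>* (x, c) (neg_lit (x, c))" if "x \<in> X" for x
    using ex_possible[OF that] refuting_cycle_of_self_refutation no_cycle by blast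
  have "finite X"
    using scenario by (simp add: compat_scenario_def)
  then obtain t where t: "t \<in> X \<rightarrow>\<^sub>E {0, 1}" "\<forall>l\<in>?S. t (fst l) = snd l" "\<forall>x\<in>X. possible (x, t x)"
    "\<forall>l m. forces l m \<longrightarrow> t (fst l) = snd l \<longrightarrow> t (fst m) = snd m"
    using two_sat[of X forces possible ?S] forces_lits forces_neg_lit possible_forces S S_consistent choice
    by blast
  have "restrict t C = s"
    using t(2) s by (auto simp: fun_eq_iff PiE_iff extensional_def)
  then show ?thesis
    using global_section_of_forces_closed[OF t(1,3,4)] by blast
qed

lemma refuting_cycle_not_extendable:
  assumes "refuting_cycle W"
  obtains C s where "C \<in> Cs" and "s \<in> C \<rightarrow>\<^sub>E {0, 1}" and "0 < p C s"
    and "\<nexists>t. global_section X Cs {0, 1} p t \<and> restrict t C = s"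
proof -
  let ?l = "neg_lit (last W)" and ?m = "hd W"
  let ?C = "{fst ?l, fst ?m}" and ?s = "(\<lambda>_. undefined)(fst ?l := snd ?l, fst ?m := snd ?m)"
  have W: "W \<noteq> []" "successively forces W" and pair: "possible_pair ?l ?m"
    using assms by (auto simp: refuting_cycle_def)
  have "?C \<in> Cs" and "0 < p ?C ?s" and "fst ?l \<noteq> fst ?m"
    using pair by (auto simp: possible_pair_def joint_prob_def)
  moreover have "?s \<in> ?C \<rightarrow>\<^sub>E {0, 1}"
    using pair unfolding possible_pair_def by (intro doubleton_fun_PiE) blast+
  moreover have "\<not> (global_section X Cs {0, 1} p t \<and> restrict t ?C = ?s)" for t
  proof
    assume t: "global_section X Cs {0, 1} p t \<and> restrict t ?C = ?s"
    have "t (fst ?l) = snd ?l" and "t (fst ?m) = snd ?m"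
      using fun_cong[OF conjunct2[OF t], of "fst ?l"] fun_cong[OF conjunct2[OF t], of "fst ?m"]
        \<open>fst ?l \<noteq> fst ?m\<close> by simp_all
    have "t (fst w) = snd w" if "w \<in> set W" for w
      by (rule successively_invariant[OF W(2) _ _ that, where P = "\<lambda>w. t (fst w) = snd w"])
        (use \<open>t (fst ?m) = snd ?m\<close> forces_sound t in auto)
    then have "t (fst (last W)) = snd (last W)"
      using W(1) by simp
    with \<open>t (fst ?l) = snd ?l\<close> show False
      by simp arith
  qed
  ultimately show ?thesis
    using that by blast
qed

theorem logically_contextual_iff_refuting_cycle:
  "logically_contextual X Cs {0, 1} p \<longleftrightarrow> (\<exists>W. refuting_cycle W)"
proof
  assume "logically_contextual X Cs {0, 1} p"
  then show "\<exists>W. refuting_cycle W"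
    using logically_noncontextual_if_extensions[of Cs X "{0, 1}" p] context_subset
      extension_if_no_refuting_cycle unfolding logically_contextual_def by blast
next
  assume "\<exists>W. refuting_cycle W"
  then obtain C s where "C \<in> Cs" "s \<in> C \<rightarrow>\<^sub>E {0, 1}" "0 < p C s"
    and "\<nexists>t. global_section X Cs {0, 1} p t \<and> restrict t C = s"
    using refuting_cycle_not_extendable by blast
  then show "logically_contextual X Cs {0, 1} p"
    using extension_if_logically_noncontextual[of Cs X "{0, 1}" p] context_subset
    unfolding logically_contextual_def by blast
qed

lemma refuting_cycleD:
  assumes "refuting_cycle W"
  shows "3 \<le> length W" and "distinct (map fst W)"
    and "\<And>k. Suc k < length W \<Longrightarrow> forces (W ! k) (W ! Suc k)"
    and "possible_pair (neg_lit (W ! (length W - 1))) (W ! 0)"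
    and "\<And>k. k < length W \<Longrightarrow> snd (W ! k) \<in> {0, 1}"
proof -
  show W: "3 \<le> length W" "distinct (map fst W)" "\<And>k. Suc k < length W \<Longrightarrow> forces (W ! k) (W ! Suc k)"
    using assms by (auto simp: refuting_cycle_def successively_conv_nth)
  then have "W \<noteq> []"
    by auto
  then show "possible_pair (neg_lit (W ! (length W - 1))) (W ! 0)"
    using assms by (simp add: refuting_cycle_def last_conv_nth hd_conv_nth)
  fix k
  assume k: "k < length W"
  show "snd (W ! k) \<in> {0, 1}"
  proof (cases k)
    case 0
    then show ?thesis
      using W(1) W(3)[of 0] by (simp add: forces_def)
  next
    case (Suc k')
    then show ?thesis
      using k W(3)[of k'] by (simp add: forces_def)
  qed
qed

lemma is_cycle_of_refuting_cycle:
  assumes "refuting_cycle W"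
  shows "is_cycle Cs (map fst W)"
proof -
  note W = refuting_cycleD[OF assms]
  have "{fst (W ! r), fst (W ! ((r + 1) mod length W))} \<in> Cs" if r: "r < length W" for r
  proof (cases "Suc r < length W")
    case True
    then show ?thesis
      using W(3)[OF True] by (simp add: forces_def)
  next
    case False
    then have "Suc r = length W"
      using r by simp
    then have "r = length W - 1" and "(r + 1) mod length W = 0"
      by auto
    then show ?thesis
      using W(4) by (simp add: possible_pair_def)
  qed
  moreover have "0 < length W"
    using W(1) by linarith
  ultimately show ?thesis
    using W(1,2) by (simp add: is_cycle_def)
qed

lemma edge_prob_of_refuting_cycle:
  assumes "refuting_cycle W"
  shows "0 < edge_prob p (map fst W) (length W - 1) (1 - snd (W ! (length W - 1))) (snd (W ! 0))"
    and "1 \<le> j \<Longrightarrow> j < length W \<Longrightarrow>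
      edge_prob p (map fst W) (length W - 1 + j) (snd (W ! (j - 1))) (1 - snd (W ! j)) = 0"
proof -
  note W = refuting_cycleD[OF assms]
  have "Suc (length W - 1) = length W" and "0 < length W"
    using W(1) by linarith+
  then show "0 < edge_prob p (map fst W) (length W - 1) (1 - snd (W ! (length W - 1))) (snd (W ! 0))"
    using W(1,4) by (simp add: edge_prob_eq_joint_prob possible_pair_def neg_lit_def)
  assume j: "1 \<le> j" "j < length W"
  then have "(length W - 1 + j) mod length W = j - 1" and "(length W - 1 + j + 1) mod length W = j"
    by (simp_all add: mod_if)
  then show "edge_prob p (map fst W) (length W - 1 + j) (snd (W ! (j - 1))) (1 - snd (W ! j)) = 0"
    using W(3)[of "j - 1"] j by (simp add: edge_prob_eq_joint_prob forces_def neg_lit_def)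
qed

lemma cycle_condition_of_refuting_cycle:
  assumes "refuting_cycle W"
  shows "\<exists>N i a b \<alpha>. is_cycle Cs N \<and> i < length N \<and> a \<in> {0, 1} \<and> b \<in> {0, 1} \<and>
       (\<forall>j\<in>{1..length N - 2}. \<alpha> j \<in> {0, 1}) \<and>
       edge_prob p N i a b > 0 \<and>
       edge_prob p N (i + 1) b (\<alpha> 1) = 0 \<and>
       (\<forall>j\<in>{2..length N - 2}. edge_prob p N (i + j) (1 - \<alpha> (j - 1)) (\<alpha> j) = 0) \<and>
       edge_prob p N (i + length N - 1) (1 - \<alpha> (length N - 2)) a = 0"
proof -
  define n where "n = length W"
  define N where "N = map fst W"
  define \<alpha> where "\<alpha> j = 1 - snd (W ! j)" for j
  have n: "3 \<le> n" and lenN: "length N = n"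
    using refuting_cycleD(1)[OF assms] by (simp_all add: n_def N_def)
  have vals: "snd (W ! k) \<in> {0, 1}" if "k < n" for k
    using refuting_cycleD(5)[OF assms] that by (simp add: n_def)
  have step: "edge_prob p N (n - 1 + j) (snd (W ! (j - 1))) (1 - snd (W ! j)) = 0"
    if "1 \<le> j" and "j < n" for j
    using edge_prob_of_refuting_cycle(2)[OF assms] that by (simp add: n_def N_def)
  have "edge_prob p N (n - 1 + 1) (snd (W ! 0)) (\<alpha> 1) = 0"
    using step[of 1] n by (simp add: \<alpha>_def)
  moreover have "edge_prob p N (n - 1 + j) (1 - \<alpha> (j - 1)) (\<alpha> j) = 0" if "j \<in> {2..n - 2}" for j
  proof -
    have j: "1 \<le> j" "j < n"
      using that n by auto
    then have "1 - \<alpha> (j - 1) = snd (W ! (j - 1))"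
      using vals[of "j - 1"] by (force simp: \<alpha>_def)
    then show ?thesis
      using step[OF j] by (simp add: \<alpha>_def)
  qed
  moreover have "edge_prob p N (n - 1 + n - 1) (1 - \<alpha> (n - 2)) (1 - snd (W ! (n - 1))) = 0"
  proof -
    have "1 - \<alpha> (n - 2) = snd (W ! (n - 2))"
      using vals[of "n - 2"] n by (force simp: \<alpha>_def)
    moreover have "n - 1 + n - 1 = n - 1 + (n - 1)" and "n - 1 - 1 = n - 2"
      using n by auto
    ultimately show ?thesis
      using step[of "n - 1"] n by simp
  qed
  moreover have "\<alpha> j \<in> {0, 1}" and "1 - snd (W ! (n - 1)) \<in> {0, 1}" for j
    by (auto simp: \<alpha>_def)
  moreover have "is_cycle Cs N" and "0 < edge_prob p N (n - 1) (1 - snd (W ! (n - 1))) (snd (W ! 0))"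
    using is_cycle_of_refuting_cycle[OF assms] edge_prob_of_refuting_cycle(1)[OF assms]
    by (simp_all add: n_def N_def)
  moreover have "n - 1 < n" and "snd (W ! 0) \<in> {0, 1}"
    using n vals[of 0] by simp_all
  ultimately show ?thesis
    by (intro exI[of _ N] exI[of _ "n - 1"] exI[of _ "1 - snd (W ! (n - 1))"] exI[of _ "snd (W ! 0)"]
        exI[of _ \<alpha>]) (simp only: lenN, blast)
qed

lemma refuting_cycle_of_labelling:
  assumes cycle: "is_cycle Cs N" and i: "i < length N" and w01: "\<And>k. w k \<in> {0, 1}"
    and closing: "0 < edge_prob p N i (1 - w (length N - 1)) (w 0)"
    and steps: "\<And>k. Suc k < length N \<Longrightarrow> edge_prob p N (i + 1 + k) (w k) (1 - w (Suc k)) = 0"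
  shows "refuting_cycle (map (\<lambda>k. (N ! ((i + 1 + k) mod length N), w k)) [0..<length N])"
    (is "refuting_cycle ?W")
proof -
  define n where "n = length N"
  define vertex where "vertex k = N ! ((i + 1 + k) mod n)" for k
  have n: "3 \<le> n" and dist: "distinct N"
    using cycle by (auto simp: is_cycle_def n_def)
  have lenW: "length ?W = n" and W_nth: "\<And>k. k < n \<Longrightarrow> ?W ! k = (vertex k, w k)"
    by (simp_all add: vertex_def n_def)
  have edge: "{vertex k, vertex (Suc k)} \<in> Cs" and vertex_ne: "vertex k \<noteq> vertex (Suc k)" for k
    using is_cycle_edge[OF cycle, of "i + 1 + k"] distinct_nth_mod_Suc_neq[OF dist, of "i + 1 + k"] n
    by (simp_all add: vertex_def n_def)
  have "joint_prob p (vertex k, w k) (vertex (Suc k), 1 - w (Suc k)) = 0" if "Suc k < n" for k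
    using steps[of k] that by (simp add: edge_prob_eq_joint_prob vertex_def n_def)
  then have "successively forces ?W"
    unfolding successively_conv_nth lenW
    using W_nth edge vertex_ne w01 by (simp add: forces_def neg_lit_def)
  moreover have "map fst ?W = rotate (i + 1) N"
    by (rule nth_equalityI) (simp_all add: nth_rotate del: rotate_Suc)
  then have "distinct (map fst ?W)"
    using dist by simp
  moreover have "possible_pair (neg_lit (last ?W)) (hd ?W)"
  proof -
    have "i + 1 + (n - 1) = i + n"
      using n by simp
    then have "vertex (n - 1) = N ! i"
      using i by (simp add: vertex_def n_def)
    moreover have "?W \<noteq> []"
      using lenW n by auto
    ultimately have "last ?W = (N ! i, w (n - 1))" and "hd ?W = (N ! ((i + 1) mod n), w 0)"
      using lenW W_nth[of "n - 1"] W_nth[of 0] n by (simp_all add: last_conv_nth hd_conv_nth vertex_def)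
    then show ?thesis
      using is_cycle_edge[OF cycle, of i] distinct_nth_mod_Suc_neq[OF dist, of i] closing w01 i n
      by (auto simp: possible_pair_def edge_prob_eq_joint_prob neg_lit_def n_def)
  qed
  ultimately show ?thesis
    using n lenW unfolding refuting_cycle_def by blast
qed

lemma refuting_cycle_of_cycle_condition:
  assumes cycle: "is_cycle Cs N" and i: "i < length N" and ab: "a \<in> {0, 1}" "b \<in> {0, 1}"
    and \<alpha>01: "\<forall>j\<in>{1..length N - 2}. \<alpha> j \<in> {0, 1}"
    and E0: "edge_prob p N i a b > 0"
    and E1: "edge_prob p N (i + 1) b (\<alpha> 1) = 0"
    and E2: "\<forall>j\<in>{2..length N - 2}. edge_prob p N (i + j) (1 - \<alpha> (j - 1)) (\<alpha> j) = 0"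
    and E3: "edge_prob p N (i + length N - 1) (1 - \<alpha> (length N - 2)) a = 0"
  shows "\<exists>W. refuting_cycle W"
proof -
  let ?w = "\<lambda>k. if k = 0 then b else if k = length N - 1 then 1 - a else 1 - \<alpha> k"
  have n: "3 \<le> length N"
    using cycle by (simp add: is_cycle_def)
  have "?w k \<in> {0, 1}" for k
    using ab by auto
  moreover have "0 < edge_prob p N i (1 - ?w (length N - 1)) (?w 0)"
    using E0 ab n by auto
  moreover note cycle_condition_steps[OF n ab(1) \<alpha>01 E1 E2 E3]
  ultimately show ?thesis
    using refuting_cycle_of_labelling[where w = ?w, OF cycle i] by blast
qed

end

theorem theorem3:
  fixes X :: "'x set" and Cs :: "'x set set"
    and p :: "'x set \<Rightarrow> ('x \<Rightarrow> nat) \<Rightarrow> real"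
  assumes "compat_scenario X Cs {0, 1}"
    and "simple_scenario Cs"
    and "\<exists>N. is_cycle Cs N"
    and "behavior Cs {0, 1} p"
    and "nondisturbing Cs {0, 1} p"
  shows "logically_contextual X Cs {0, 1} p \<longleftrightarrow>
    (\<exists>N i a b \<alpha>. is_cycle Cs N \<and> i < length N \<and> a \<in> {0, 1} \<and> b \<in> {0, 1} \<and>
       (\<forall>j\<in>{1..length N - 2}. \<alpha> j \<in> {0, 1}) \<and>
       edge_prob p N i a b > 0 \<and>
       edge_prob p N (i + 1) b (\<alpha> 1) = 0 \<and>
       (\<forall>j\<in>{2..length N - 2}. edge_prob p N (i + j) (1 - \<alpha> (j - 1)) (\<alpha> j) = 0) \<and>
       edge_prob p N (i + length N - 1) (1 - \<alpha> (length N - 2)) a = 0)"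
proof -
  interpret simple_nondisturbing_behavior X Cs p
    using assms(1,2,4,5) by unfold_locales
  show ?thesis (is "_ \<longleftrightarrow> ?condition")
  proof
    assume "logically_contextual X Cs {0, 1} p"
    then obtain W where "refuting_cycle W"
      using logically_contextual_iff_refuting_cycle by blast
    then show ?condition
      by (rule cycle_condition_of_refuting_cycle)
  next
    assume ?condition
    then have "\<exists>W. refuting_cycle W"
      by (elim exE conjE) (rule refuting_cycle_of_cycle_condition)
    then show "logically_contextual X Cs {0, 1} p"
      using logically_contextual_iff_refuting_cycle by blast
  qed
qed

end
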